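(* Let $\mathfrak g\xrightarrow{\mu}\mathfrak h$ be a crossed module of Lie algebras, $\phi:W\to V$ linear, $\rho$ a 2-representation on $\phi$, and $\omega\in C^{p,q}_r(\mathfrak g_1,\phi)$. Then $(\partial\delta_{(1)}-\delta_{(1)}\partial)\omega=0\in C^{p+1,q}_{r+1}(\mathfrak g_1,\phi)$; thus, for fixed $q$, the spaces $C^{p,q}_r$ with differentials $\partial$ and $\delta_{(1)}$ form a double complex (the $q$-page).
   Context: Crossed module: Lie algebras $\mathfrak g,\mathfrak h$, Lie homomorphism $\mu$, action $\mathcal L:\mathfrak h\to\mathrm{Der}(\mathfrak g)$ with $\mu(\mathcal L_yx)=[y,\mu(x)]$, $\mathcal L_{\mu(x_0)}x_1=[x_0,x_1]$. 2-representation: linear $\rho_0^1:\mathfrak h\to\mathfrak{gl}(W)$, $\rho_0^0:\mathfrak h\to\mathfrak{gl}(V)$, $\rho_1:\mathfrak g\to\mathrm{Hom}(V,W)$ with $\rho_0^1,\rho_0^0$ representations, $\phi\rho_0^1(y)=\rho_0^0(y)\phi$, $\rho_1([x_0,x_1])=\rho_1(x_0)\phi\rho_1(x_1)-\rho_1(x_1)\phi\rho_1(x_0)$, $\rho_0^0(\mu(x))=\phi\rho_1(x)$, $\rho_0^1(\mu(x))=\rho_1(x)\phi$, $\rho_1(\mathcal L_yx)=\rho_0^1(y)\rho_1(x)-\rho_1(x)\rho_0^0(y)$. $\mathfrak g_0=\mathfrak h$; for $p\ge1$, $\mathfrak g_p=\mathfrak g^p\oplus\mathfrak h$, elements $(x^0,\dots,x^{p-1};y)$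 (a Lie algebra as composable strings of arrows of $\mathfrak g\oplus_{\mathcal L}\mathfrak h$). Face maps $\partial_k:\mathfrak g_{p+1}\to\mathfrak g_p$, $0\le k\le p+1$: $\partial_0(x^0,\dots,x^p;y)=(x^1,\dots,x^p;y)$; $\partial_k(x^0,\dots,x^p;y)=(x^0,\dots,x^{k-1}+x^k,\dots,x^p;y)$ for $0<k\le p$; $\partial_{p+1}(x^0,\dots,x^p;y)=(x^0,\dots,x^{p-1};y+\mu(x^p))$; applied to tuples componentwise. $C^{p,q}_r=\bigwedge^q\mathfrak g_p^*\otimes\bigwedge^r\mathfrak g^*\otimes W$ for $r\ge1$, $C^{p,q}_0=\bigwedge^q\mathfrak g_p^*\otimes V$; elements $\omega(\Xi;Z)$. $\partial:C^{p,q}_r\to C^{p+1,q}_r$, $\partial\omega(\Xi;Z)=\sum_{k=0}^{p+1}(-1)^k\omega(\partial_k\Xi;Z)$. $\delta_{(1)}:C^{p,q}_r\to C^{p,q}_{r+1}$: $\delta_{(1)}\omega(\Xi;x)=\rho_1(x)\omega(\Xi)$ for $r=0$; for $r\ge1$, $\delta_{(1)}\omega(\Xi;z_0,\dots,z_r)=\sum_k(-1)^k\rho_0^1(\mu(z_k))\omega(\Xi;Z(k))+\sum_{a<b}(-1)^{a+b}\omega(\Xi;[z_a,z_b],Z(a,b))$, $Z(k),Z(a,b)$ denoting removal of entries. *)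

theory Defs
  imports Main "HOL.Vector_Spaces"
begin

definition lie_algebra :: "('k::field \<Rightarrow> 'a::ab_group_add \<Rightarrow> 'a) \<Rightarrow> ('a \<Rightarrow> 'a \<Rightarrow> 'a) \<Rightarrow> bool" where
  "lie_algebra s br \<longleftrightarrow> vector_space s
     \<and> (\<forall>x. Vector_Spaces.linear s s (br x))
     \<and> (\<forall>y. Vector_Spaces.linear s s (\<lambda>x. br x y))
     \<and> (\<forall>x. br x x = 0)
     \<and> (\<forall>x y z. br x (br y z) + br y (br z x) + br z (br x y) = 0)"

definition lie_hom :: "('k::field \<Rightarrow> 'a::ab_group_add \<Rightarrow> 'a) \<Rightarrow> ('a \<Rightarrow> 'a \<Rightarrow> 'a)
    \<Rightarrow> ('k \<Rightarrow> 'b::ab_group_add \<Rightarrow> 'b) \<Rightarrow> ('b \<Rightarrow> 'b \<Rightarrow> 'b) \<Rightarrow> ('a \<Rightarrow> 'b) \<Rightarrow> bool" where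
  "lie_hom s1 b1 s2 b2 f \<longleftrightarrow> Vector_Spaces.linear s1 s2 f \<and> (\<forall>x y. f (b1 x y) = b2 (f x) (f y))"

definition derivation :: "('k::field \<Rightarrow> 'a::ab_group_add \<Rightarrow> 'a) \<Rightarrow> ('a \<Rightarrow> 'a \<Rightarrow> 'a) \<Rightarrow> ('a \<Rightarrow> 'a) \<Rightarrow> bool" where
  "derivation s b D \<longleftrightarrow> Vector_Spaces.linear s s D \<and> (\<forall>x y. D (b x y) = b (D x) y + b x (D y))"

definition lie_rep :: "('k::field \<Rightarrow> 'h::ab_group_add \<Rightarrow> 'h) \<Rightarrow> ('h \<Rightarrow> 'h \<Rightarrow> 'h)
    \<Rightarrow> ('k \<Rightarrow> 'w::ab_group_add \<Rightarrow> 'w) \<Rightarrow> ('h \<Rightarrow> 'w \<Rightarrow> 'w) \<Rightarrow> bool" where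
  "lie_rep sh bh sw \<rho> \<longleftrightarrow> vector_space sw
     \<and> (\<forall>y. Vector_Spaces.linear sw sw (\<rho> y))
     \<and> (\<forall>y1 y2 w. \<rho> (y1 + y2) w = \<rho> y1 w + \<rho> y2 w)
     \<and> (\<forall>c y w. \<rho> (sh c y) w = sw c (\<rho> y w))
     \<and> (\<forall>y1 y2 w. \<rho> (bh y1 y2) w = \<rho> y1 (\<rho> y2 w) - \<rho> y2 (\<rho> y1 w))"

definition crossed_module :: "('k::field \<Rightarrow> 'g::ab_group_add \<Rightarrow> 'g) \<Rightarrow> ('g \<Rightarrow> 'g \<Rightarrow> 'g)
    \<Rightarrow> ('k \<Rightarrow> 'h::ab_group_add \<Rightarrow> 'h) \<Rightarrow> ('h \<Rightarrow> 'h \<Rightarrow> 'h) \<Rightarrow> ('g \<Rightarrow> 'h) \<Rightarrow> ('h \<Rightarrow> 'g \<Rightarrow> 'g) \<Rightarrow> bool" where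
  "crossed_module sg bg sh bh \<mu> L \<longleftrightarrow>
     lie_algebra sg bg \<and> lie_algebra sh bh \<and> lie_hom sg bg sh bh \<mu>
     \<and> (\<forall>y1 y2 x. L (y1 + y2) x = L y1 x + L y2 x)
     \<and> (\<forall>c y x. L (sh c y) x = sg c (L y x))
     \<and> (\<forall>y. derivation sg bg (L y))
     \<and> (\<forall>y1 y2 x. L (bh y1 y2) x = L y1 (L y2 x) - L y2 (L y1 x))
     \<and> (\<forall>y x. \<mu> (L y x) = bh y (\<mu> x))
     \<and> (\<forall>x0 x1. L (\<mu> x0) x1 = bg x0 x1)"

definition two_rep :: "('k::field \<Rightarrow> 'g::ab_group_add \<Rightarrow> 'g) \<Rightarrow> ('g \<Rightarrow> 'g \<Rightarrow> 'g)
    \<Rightarrow> ('k \<Rightarrow> 'h::ab_group_add \<Rightarrow> 'h) \<Rightarrow> ('h \<Rightarrow> 'h \<Rightarrow> 'h) \<Rightarrow> ('g \<Rightarrow> 'h) \<Rightarrow> ('h \<Rightarrow> 'g \<Rightarrow> 'g)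
    \<Rightarrow> ('k \<Rightarrow> 'w::ab_group_add \<Rightarrow> 'w) \<Rightarrow> ('k \<Rightarrow> 'v::ab_group_add \<Rightarrow> 'v) \<Rightarrow> ('w \<Rightarrow> 'v)
    \<Rightarrow> ('h \<Rightarrow> 'w \<Rightarrow> 'w) \<Rightarrow> ('h \<Rightarrow> 'v \<Rightarrow> 'v) \<Rightarrow> ('g \<Rightarrow> 'v \<Rightarrow> 'w) \<Rightarrow> bool" where
  "two_rep sg bg sh bh \<mu> L sw sv \<phi> \<rho>01 \<rho>00 \<rho>1 \<longleftrightarrow>
     vector_space sw \<and> vector_space sv \<and> Vector_Spaces.linear sw sv \<phi>
     \<and> lie_rep sh bh sw \<rho>01 \<and> lie_rep sh bh sv \<rho>00
     \<and> (\<forall>x. Vector_Spaces.linear sv sw (\<rho>1 x))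
     \<and> (\<forall>x1 x2 v. \<rho>1 (x1 + x2) v = \<rho>1 x1 v + \<rho>1 x2 v)
     \<and> (\<forall>c x v. \<rho>1 (sg c x) v = sw c (\<rho>1 x v))
     \<and> (\<forall>y w. \<phi> (\<rho>01 y w) = \<rho>00 y (\<phi> w))
     \<and> (\<forall>x0 x1 v. \<rho>1 (bg x0 x1) v = \<rho>1 x0 (\<phi> (\<rho>1 x1 v)) - \<rho>1 x1 (\<phi> (\<rho>1 x0 v)))
     \<and> (\<forall>x v. \<rho>00 (\<mu> x) v = \<phi> (\<rho>1 x v))
     \<and> (\<forall>x w. \<rho>01 (\<mu> x) w = \<rho>1 x (\<phi> w))
     \<and> (\<forall>y x v. \<rho>1 (L y x) v = \<rho>01 y (\<rho>1 x v) - \<rho>1 x (\<rho>00 y v))"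

section \<open>The spaces g_p = g^p + h, elements (x^0,...,x^(p-1); y) encoded as (list, y)\<close>

definition gp_carrier :: "nat \<Rightarrow> ('g list \<times> 'h) set" where
  "gp_carrier p = {(xs, y). length xs = p}"

definition gp_add :: "('g::ab_group_add list \<times> 'h::ab_group_add) \<Rightarrow> ('g list \<times> 'h) \<Rightarrow> ('g list \<times> 'h)" where
  "gp_add a b = (map2 (+) (fst a) (fst b), snd a + snd b)"

definition gp_scale :: "('k \<Rightarrow> 'g \<Rightarrow> 'g) \<Rightarrow> ('k \<Rightarrow> 'h \<Rightarrow> 'h) \<Rightarrow> 'k \<Rightarrow> ('g list \<times> 'h) \<Rightarrow> ('g list \<times> 'h)" where
  "gp_scale sg sh c a = (map (sg c) (fst a), sh c (snd a))"

text \<open>Face maps d_k : g_(p+1) -> g_p, 0 <= k <= p+1 (argument has a list of length p+1).\<close>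
definition face :: "('g::ab_group_add \<Rightarrow> 'h::ab_group_add) \<Rightarrow> nat \<Rightarrow> nat \<Rightarrow> ('g list \<times> 'h) \<Rightarrow> ('g list \<times> 'h)" where
  "face \<mu> p k a = (let xs = fst a; y = snd a in
     if k = 0 then (tl xs, y)
     else if k \<le> p then (take (k - 1) xs @ [xs ! (k - 1) + xs ! k] @ drop (k + 1) xs, y)
     else (butlast xs, y + \<mu> (last xs)))"

definition alt_multilin_on :: "'b set \<Rightarrow> ('b \<Rightarrow> 'b \<Rightarrow> 'b) \<Rightarrow> ('k \<Rightarrow> 'b \<Rightarrow> 'b)
    \<Rightarrow> ('k \<Rightarrow> 'a::ab_group_add \<Rightarrow> 'a) \<Rightarrow> nat \<Rightarrow> ('b list \<Rightarrow> 'a) \<Rightarrow> bool" where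
  "alt_multilin_on A add sc sa n F \<longleftrightarrow>
     (\<forall>xs. length xs = n \<and> set xs \<subseteq> A \<longrightarrow>
        (\<forall>i<n. \<forall>a\<in>A. \<forall>b\<in>A. F (xs[i := add a b]) = F (xs[i := a]) + F (xs[i := b]))
      \<and> (\<forall>i<n. \<forall>a\<in>A. \<forall>c. F (xs[i := sc c a]) = sa c (F (xs[i := a])))
      \<and> (\<forall>i<n. \<forall>j<n. i \<noteq> j \<and> xs ! i = xs ! j \<longrightarrow> F xs = 0))"

text \<open>C^{p,q}_r for r >= 1: maps (Xi; Z) |-> W, Xi a q-tuple in g_p, Z an r-tuple in g.\<close>
definition cochain_W :: "('k::field \<Rightarrow> 'g::ab_group_add \<Rightarrow> 'g) \<Rightarrow> ('k \<Rightarrow> 'h::ab_group_add \<Rightarrow> 'h)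
    \<Rightarrow> ('k \<Rightarrow> 'w::ab_group_add \<Rightarrow> 'w) \<Rightarrow> nat \<Rightarrow> nat \<Rightarrow> nat
    \<Rightarrow> (('g list \<times> 'h) list \<Rightarrow> 'g list \<Rightarrow> 'w) \<Rightarrow> bool" where
  "cochain_W sg sh sw p q r \<omega> \<longleftrightarrow>
     (\<forall>Z. length Z = r \<longrightarrow> alt_multilin_on (gp_carrier p) gp_add (gp_scale sg sh) sw q (\<lambda>\<Xi>. \<omega> \<Xi> Z))
   \<and> (\<forall>\<Xi>. length \<Xi> = q \<and> set \<Xi> \<subseteq> gp_carrier p \<longrightarrow> alt_multilin_on UNIV (+) sg sw r (\<omega> \<Xi>))"

text \<open>C^{p,q}_0: maps Xi |-> V.\<close>
definition cochain_V :: "('k::field \<Rightarrow> 'g::ab_group_add \<Rightarrow> 'g) \<Rightarrow> ('k \<Rightarrow> 'h::ab_group_add \<Rightarrow> 'h)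
    \<Rightarrow> ('k \<Rightarrow> 'v::ab_group_add \<Rightarrow> 'v) \<Rightarrow> nat \<Rightarrow> nat
    \<Rightarrow> (('g list \<times> 'h) list \<Rightarrow> 'v) \<Rightarrow> bool" where
  "cochain_V sg sh sv p q \<omega> \<longleftrightarrow> alt_multilin_on (gp_carrier p) gp_add (gp_scale sg sh) sv q \<omega>"

definition alt_sign :: "nat \<Rightarrow> 'a::ab_group_add \<Rightarrow> 'a" where
  "alt_sign k x = (if even k then x else - x)"

definition del_nth :: "nat \<Rightarrow> 'a list \<Rightarrow> 'a list" where
  "del_nth k xs = take k xs @ drop (Suc k) xs"

definition dpar :: "('g::ab_group_add \<Rightarrow> 'h::ab_group_add) \<Rightarrow> nat
    \<Rightarrow> (('g list \<times> 'h) list \<Rightarrow> 'a::ab_group_add) \<Rightarrow> ('g list \<times> 'h) list \<Rightarrow> 'a" where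
  "dpar \<mu> p \<omega> \<Xi> = (\<Sum>k\<in>{0..Suc p}. alt_sign k (\<omega> (map (face \<mu> p k) \<Xi>)))"

definition dpar_W :: "('g::ab_group_add \<Rightarrow> 'h::ab_group_add) \<Rightarrow> nat
    \<Rightarrow> (('g list \<times> 'h) list \<Rightarrow> 'g list \<Rightarrow> 'a::ab_group_add) \<Rightarrow> ('g list \<times> 'h) list \<Rightarrow> 'g list \<Rightarrow> 'a" where
  "dpar_W \<mu> p \<omega> \<Xi> Z = dpar \<mu> p (\<lambda>\<Xi>'. \<omega> \<Xi>' Z) \<Xi>"

text \<open>delta_(1) : C^{p,q}_r -> C^{p,q}_(r+1) for r >= 1; Z = (z_0,...,z_r).\<close>
definition delta_W :: "('g::ab_group_add \<Rightarrow> 'h) \<Rightarrow> ('g \<Rightarrow> 'g \<Rightarrow> 'g) \<Rightarrow> ('h \<Rightarrow> 'w \<Rightarrow> 'w::ab_group_add)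
    \<Rightarrow> (('g list \<times> 'h) list \<Rightarrow> 'g list \<Rightarrow> 'w) \<Rightarrow> ('g list \<times> 'h) list \<Rightarrow> 'g list \<Rightarrow> 'w" where
  "delta_W \<mu> bg \<rho>01 \<omega> \<Xi> Z =
     (\<Sum>k<length Z. alt_sign k (\<rho>01 (\<mu> (Z ! k)) (\<omega> \<Xi> (del_nth k Z))))
   + (\<Sum>(a, b)\<in>{(a, b). a < b \<and> b < length Z}.
        alt_sign (a + b) (\<omega> \<Xi> (bg (Z ! a) (Z ! b) # del_nth a (del_nth b Z))))"

definition delta_0 :: "('g \<Rightarrow> 'v \<Rightarrow> 'w) \<Rightarrow> (('g list \<times> 'h) list \<Rightarrow> 'v) \<Rightarrow> ('g list \<times> 'h) list \<Rightarrow> 'g list \<Rightarrow> 'w" where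
  "delta_0 \<rho>1 \<omega> \<Xi> Z = \<rho>1 (hd Z) (\<omega> \<Xi>)"

end

theory Submission
  imports Defs
begin

text \<open>The simplicial differential \<open>\<partial>\<close> is an alternating sum of reindexings of the
  \<open>\<mathfrak>g\<^sub>p\<close>-arguments \<open>\<Xi>\<close>, while \<open>\<delta>\<^sub>1\<close> only touches the \<open>\<mathfrak>g\<close>-arguments \<open>Z\<close> and acts on
  values through the linear maps \<open>\<rho>\<^sub>0\<^sup>1(\<mu> z)\<close> (resp. \<open>\<rho>\<^sub>1(x)\<close>). Operations on disjoint sets of
  variables commute, so \<open>\<partial>\<delta>\<^sub>1 = \<delta>\<^sub>1\<partial>\<close>; of the crossed-module and 2-representation
  axioms only this linearity is used.\<close>

lemma alt_sign_add: "alt_sign k (x + y) = alt_sign k x + alt_sign k (y :: 'a::ab_group_add)"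
  by (simp add: alt_sign_def)

lemma alt_sign_sum: "alt_sign k (sum f A) = (\<Sum>a\<in>A. alt_sign k (f a :: 'a::ab_group_add))"
  by (simp add: alt_sign_def sum_negf)

lemma alt_sign_commute: "alt_sign a (alt_sign b (x :: 'a::ab_group_add)) = alt_sign b (alt_sign a x)"
  by (simp add: alt_sign_def)

lemma linear_map_sum: "Vector_Spaces.linear s1 s2 f \<Longrightarrow> f (sum g A) = (\<Sum>a\<in>A. f (g a))"
  using module_hom.sum[OF linear.axioms(3)] by blast

lemma linear_map_alt_sign: "Vector_Spaces.linear s1 s2 f \<Longrightarrow> f (alt_sign k x) = alt_sign k (f x)"
  using module_hom.neg[OF linear.axioms(3)] by (auto simp: alt_sign_def)

lemma delta_W_signed_reindex_sum:
  assumes "\<And>y. Vector_Spaces.linear sw sw (\<rho>01 y)"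
  shows "(\<Sum>k\<in>K. alt_sign k (delta_W \<mu> bg \<rho>01 \<omega> (F k \<Xi>) Z))
     = delta_W \<mu> bg \<rho>01 (\<lambda>\<Xi>' Z'. \<Sum>k\<in>K. alt_sign k (\<omega> (F k \<Xi>') Z')) \<Xi> Z"
  unfolding delta_W_def
  by (simp add: alt_sign_add alt_sign_sum linear_map_sum[OF assms] linear_map_alt_sign[OF assms]
      sum.distrib alt_sign_commute sum.swap[of _ K] case_prod_unfold)

lemma dpar_W_delta_W_commute:
  assumes "\<And>y. Vector_Spaces.linear sw sw (\<rho>01 y)"
  shows "dpar_W \<mu> p (delta_W \<mu> bg \<rho>01 \<omega>) = delta_W \<mu> bg \<rho>01 (dpar_W \<mu> p \<omega>)"
proof (intro ext)
  fix \<Xi> Z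
  show "dpar_W \<mu> p (delta_W \<mu> bg \<rho>01 \<omega>) \<Xi> Z = delta_W \<mu> bg \<rho>01 (dpar_W \<mu> p \<omega>) \<Xi> Z"
    unfolding dpar_W_def dpar_def
    using delta_W_signed_reindex_sum[OF assms, where K = "{0..Suc p}" and F = "\<lambda>k. map (face \<mu> p k)"]
    by (simp del: sum.atLeast0_atMost_Suc)
qed

lemma dpar_W_delta_0_commute:
  assumes "\<And>x. Vector_Spaces.linear sv sw (\<rho>1 x)"
  shows "dpar_W \<mu> p (delta_0 \<rho>1 \<omega>) = delta_0 \<rho>1 (dpar \<mu> p \<omega>)"
  unfolding dpar_W_def dpar_def delta_0_def
  by (simp only: linear_map_sum[OF assms] linear_map_alt_sign[OF assms])

theorem mainTheorem8:
  fixes sg :: "'k::field \<Rightarrow> 'g::ab_group_add \<Rightarrow> 'g" and bg :: "'g \<Rightarrow> 'g \<Rightarrow> 'g"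
    and sh :: "'k \<Rightarrow> 'h::ab_group_add \<Rightarrow> 'h" and bh :: "'h \<Rightarrow> 'h \<Rightarrow> 'h"
    and \<mu> :: "'g \<Rightarrow> 'h" and L :: "'h \<Rightarrow> 'g \<Rightarrow> 'g"
    and sw :: "'k \<Rightarrow> 'w::ab_group_add \<Rightarrow> 'w" and sv :: "'k \<Rightarrow> 'v::ab_group_add \<Rightarrow> 'v"
    and \<phi> :: "'w \<Rightarrow> 'v" and \<rho>01 :: "'h \<Rightarrow> 'w \<Rightarrow> 'w" and \<rho>00 :: "'h \<Rightarrow> 'v \<Rightarrow> 'v"
    and \<rho>1 :: "'g \<Rightarrow> 'v \<Rightarrow> 'w"
  assumes "crossed_module sg bg sh bh \<mu> L"
    and "two_rep sg bg sh bh \<mu> L sw sv \<phi> \<rho>01 \<rho>00 \<rho>1"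
  shows "(\<forall>p q r (\<omega> :: ('g list \<times> 'h) list \<Rightarrow> 'g list \<Rightarrow> 'w).
            1 \<le> r \<longrightarrow> cochain_W sg sh sw p q r \<omega> \<longrightarrow>
            (\<forall>\<Xi> Z. length \<Xi> = q \<and> set \<Xi> \<subseteq> gp_carrier (Suc p) \<and> length Z = Suc r \<longrightarrow>
               dpar_W \<mu> p (delta_W \<mu> bg \<rho>01 \<omega>) \<Xi> Z - delta_W \<mu> bg \<rho>01 (dpar_W \<mu> p \<omega>) \<Xi> Z = 0))
       \<and> (\<forall>p q (\<omega> :: ('g list \<times> 'h) list \<Rightarrow> 'v).
            cochain_V sg sh sv p q \<omega> \<longrightarrow>
            (\<forall>\<Xi> Z. length \<Xi> = q \<and> set \<Xi> \<subseteq> gp_carrier (Suc p) \<and> length Z = 1 \<longrightarrow>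
               dpar_W \<mu> p (delta_0 \<rho>1 \<omega>) \<Xi> Z - delta_0 \<rho>1 (dpar \<mu> p \<omega>) \<Xi> Z = 0))"
proof -
  have "\<And>y. Vector_Spaces.linear sw sw (\<rho>01 y)"
    using assms(2) by (simp add: two_rep_def lie_rep_def)
  then have "dpar_W \<mu> p (delta_W \<mu> bg \<rho>01 \<omega>) = delta_W \<mu> bg \<rho>01 (dpar_W \<mu> p \<omega>)" for p \<omega>
    by (rule dpar_W_delta_W_commute)
  moreover have "\<And>x. Vector_Spaces.linear sv sw (\<rho>1 x)"
    using assms(2) by (simp add: two_rep_def)
  then have "dpar_W \<mu> p (delta_0 \<rho>1 \<omega>) = delta_0 \<rho>1 (dpar \<mu> p \<omega>)" for p \<omega>
    by (rule dpar_W_delta_0_commute)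
  ultimately show ?thesis
    by simp
qed

end
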